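(* Let $E$ be a row-finite graph, $k$ a field, $h$ a positive integer, and suppose $\{1,\dots,h\}=\bigsqcup_{v\in E^0}Z(v)$ for subsets $Z(v)$. Let $\sigma=\bigsqcup_v\sigma_v$ be a permutation of $\{1,\dots,h\}$ where each $\sigma_v$ is a permutation of $Z(v)$, and set $S=\sum_{v\in E^0}\sum_{t\in Z(v)}vE_{t,\sigma_v(t)}\in M_h(L_k(E))$. Then $SS^*=S^*S=\sum_{v}\sum_{t\in Z(v)}vE_{t,t}$ is a projection in $M_h(L_k(E))$, and $$[S+(1_h-SS^* )]_1=\sum_{v\in E^0}[\operatorname{sign}(\sigma_v)v]_1\in K_1(L_k(E)).$$
   Context: $L_k(E)$ is the Leavitt path algebra of the row-finite graph $E$ (generated by $E^0\cup E^1\cup\{e^*\}$ with relations $vw=\delta_{v,w}v$, $s(e)e=e=er(e)$, $r(e)e^*=e^*=e^*s(e)$, $e^*f=\delta_{e,f}r(e)$, $v=\sum_{s(e)=v}ee^*$ for non-sinks), with involution fixing vertices and sending $e\mapsto e^*$. $E_{s,t}$ are matrix units; $1_h$ is the identity of $M_h$ over the unitization $\widetilde{L_k(E)}$, and $[U]_1$ denotes the class in $K_1(L_k(E))$ of an invertible matrix over $\widetilde{L_k(E)}$ congruent to $1$ modulo $L_k(E)$. For $\lambda\in k^\times$ and $v\in E^0$, $[\lambda v]_1$ denotes the class of $\lambda v+(1-v)$. *)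

theory Defs
  imports "HOL-Library.Poly_Mapping" "HOL-Library.Function_Algebras" "HOL-Combinatorics.Permutations"
begin

text \<open>Words in the generators form the free monoid (written additively, so
that the library's convolution algebra on finitely supported functions applies).\<close>

datatype 'x word = Word "'x list"

instantiation word :: (type) monoid_add
begin
definition zero_word :: "'x word" where "zero_word = Word []"
fun plus_word :: "'x word \<Rightarrow> 'x word \<Rightarrow> 'x word" where
  "plus_word (Word u) (Word w) = Word (u @ w)"
instance
proof
  fix a b c :: "'x word"
  show "a + b + c = a + (b + c)" by (cases a; cases b; cases c) simp
  show "0 + a = a" by (cases a) (simp add: zero_word_def)
  show "a + 0 = a" by (cases a) (simp add: zero_word_def)
qed
end

text \<open>Generators of the Leavitt path algebra: vertices, real edges, ghost edges.\<close>
datatype ('v, 'e) lgen = Vx 'v | Ed 'e | Gh 'e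

text \<open>The free unital k-algebra k<X> on X = E^0 \<union> E^1 \<union> (E^1)^*.\<close>
type_synonym ('v, 'e, 'k) freealg = "('v, 'e) lgen word \<Rightarrow>\<^sub>0 'k"

definition gen :: "('v, 'e) lgen \<Rightarrow> ('v, 'e, 'k::field) freealg" where
  "gen x = Poly_Mapping.single (Word [x]) 1"

text \<open>All relations lie in the augmentation ideal, so the
quotient k<X>/lp_ideal s r is exactly the unitization of L_k(E).\<close>

inductive_set lp_ideal :: "('e \<Rightarrow> 'v) \<Rightarrow> ('e \<Rightarrow> 'v) \<Rightarrow> ('v, 'e, 'k::field) freealg set"
  for s r where
  rel_vv: "gen (Vx v) * gen (Vx w) - (if v = w then gen (Vx v) else 0) \<in> lp_ideal s r"
| rel_se: "gen (Vx (s e)) * gen (Ed e) - gen (Ed e) \<in> lp_ideal s r"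
| rel_er: "gen (Ed e) * gen (Vx (r e)) - gen (Ed e) \<in> lp_ideal s r"
| rel_rg: "gen (Vx (r e)) * gen (Gh e) - gen (Gh e) \<in> lp_ideal s r"
| rel_gs: "gen (Gh e) * gen (Vx (s e)) - gen (Gh e) \<in> lp_ideal s r"
| rel_ck1: "gen (Gh e) * gen (Ed f) - (if e = f then gen (Vx (r e)) else 0) \<in> lp_ideal s r"
| rel_ck2: "{e. s e = v} \<noteq> {} \<Longrightarrow>
     gen (Vx v) - (\<Sum>e\<in>{e. s e = v}. gen (Ed e) * gen (Gh e)) \<in> lp_ideal s r"
| zero: "0 \<in> lp_ideal s r"
| add: "a \<in> lp_ideal s r \<Longrightarrow> b \<in> lp_ideal s r \<Longrightarrow> a + b \<in> lp_ideal s r"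
| mult_left: "a \<in> lp_ideal s r \<Longrightarrow> x * a \<in> lp_ideal s r"
| mult_right: "a \<in> lp_ideal s r \<Longrightarrow> a * x \<in> lp_ideal s r"

fun gstar :: "('v, 'e) lgen \<Rightarrow> ('v, 'e) lgen" where
  "gstar (Vx v) = Vx v" | "gstar (Ed e) = Gh e" | "gstar (Gh e) = Ed e"

fun wstar :: "'x word \<Rightarrow> ('x \<Rightarrow> 'x) \<Rightarrow> 'x word" where
  "wstar (Word w) g = Word (rev (map g w))"

definition lpstar :: "('v, 'e, 'k::field) freealg \<Rightarrow> ('v, 'e, 'k) freealg" where
  "lpstar p = (\<Sum>w\<in>Poly_Mapping.keys p. Poly_Mapping.single (wstar w gstar) (Poly_Mapping.lookup p w))"

section \<open>Matrices (indices 1..m), represented as functions nat \<Rightarrow> nat \<Rightarrow> ring\<close>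

definition mmul :: "nat \<Rightarrow> (nat \<Rightarrow> nat \<Rightarrow> 'a::semiring_0) \<Rightarrow> (nat \<Rightarrow> nat \<Rightarrow> 'a) \<Rightarrow> nat \<Rightarrow> nat \<Rightarrow> 'a" where
  "mmul m A B = (\<lambda>i j. \<Sum>l\<in>{1..m}. A i l * B l j)"

definition mone :: "nat \<Rightarrow> nat \<Rightarrow> 'a::{zero,one}" where
  "mone = (\<lambda>i j. if i = j then 1 else 0)"

definition munit :: "'a::zero \<Rightarrow> nat \<Rightarrow> nat \<Rightarrow> nat \<Rightarrow> nat \<Rightarrow> 'a" where
  "munit a s t = (\<lambda>i j. if i = s \<and> j = t then a else 0)"

definition mstar :: "(nat \<Rightarrow> nat \<Rightarrow> ('v, 'e, 'k::field) freealg) \<Rightarrow> nat \<Rightarrow> nat \<Rightarrow> ('v, 'e, 'k) freealg" where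
  "mstar A = (\<lambda>i j. lpstar (A j i))"

text \<open>Entrywise congruence of m x m matrices modulo an ideal J
 (= equality of the images as matrices over the quotient ring).\<close>
definition mcong :: "'a::ab_group_add set \<Rightarrow> nat \<Rightarrow> (nat \<Rightarrow> nat \<Rightarrow> 'a) \<Rightarrow> (nat \<Rightarrow> nat \<Rightarrow> 'a) \<Rightarrow> bool" where
  "mcong J m A B \<longleftrightarrow> (\<forall>i\<in>{1..m}. \<forall>j\<in>{1..m}. A i j - B i j \<in> J)"

definition elem :: "nat \<Rightarrow> nat \<Rightarrow> 'a::ring_1 \<Rightarrow> nat \<Rightarrow> nat \<Rightarrow> 'a" where
  "elem p q a = (\<lambda>i j. (if i = j then 1 else 0) + (if i = p \<and> j = q then a else 0))"

text \<open>The elementary subgroup E_m: generated by the e_{ij}(a) (closed under inverses since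
 e_{ij}(a)^{-1} = e_{ij}(-a)).\<close>
inductive_set elem_group :: "nat \<Rightarrow> (nat \<Rightarrow> nat \<Rightarrow> 'a::ring_1) set" for m where
  one: "mone \<in> elem_group m"
| step: "W \<in> elem_group m \<Longrightarrow> p \<in> {1..m} \<Longrightarrow> q \<in> {1..m} \<Longrightarrow> p \<noteq> q \<Longrightarrow>
     mmul m (elem p q a) W \<in> elem_group m"

definition mpad :: "nat \<Rightarrow> (nat \<Rightarrow> nat \<Rightarrow> 'a::{zero,one}) \<Rightarrow> nat \<Rightarrow> nat \<Rightarrow> 'a" where
  "mpad n A = (\<lambda>i j. if i \<le> n \<and> j \<le> n then A i j else (if i = j then 1 else 0))"

definition minvertible_mod :: "'a::ring_1 set \<Rightarrow> nat \<Rightarrow> (nat \<Rightarrow> nat \<Rightarrow> 'a) \<Rightarrow> bool" where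
  "minvertible_mod J n U \<longleftrightarrow> (\<exists>V. mcong J n (mmul n U V) mone \<and> mcong J n (mmul n V U) mone)"

text \<open>Equality of K_1-classes over R/J: [U] = [V] in GL(R/J)/E(R/J), i.e. after
 stabilisation U = W V for an elementary matrix W over R/J
 (elementary matrices over R/J lift to elementary matrices over R).\<close>
definition k1_eq :: "'a::ring_1 set \<Rightarrow> nat \<Rightarrow> (nat \<Rightarrow> nat \<Rightarrow> 'a) \<Rightarrow> nat \<Rightarrow> (nat \<Rightarrow> nat \<Rightarrow> 'a) \<Rightarrow> bool" where
  "k1_eq J n U n' V \<longleftrightarrow>
     (\<exists>m\<ge>max n n'. \<exists>W\<in>elem_group m. mcong J m (mpad n U) (mmul m W (mpad n' V)))"

text \<open>Block-diagonal matrix diag(x_1,...,x_r) of 1 x 1 blocks; its K_1-class is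
 [x_1]_1 + ... + [x_r]_1.\<close>
definition mdiag :: "'a::{zero,one} list \<Rightarrow> nat \<Rightarrow> nat \<Rightarrow> 'a" where
  "mdiag xs = (\<lambda>i j. if i = j then (if 1 \<le> i \<and> i \<le> length xs then xs ! (i - 1) else 1) else 0)"

end

theory Submission
  imports Defs
begin

text \<open>Write e_v for the class of the vertex v; modulo the Leavitt path relations these are
orthogonal idempotents, so for integer matrices A_0 and (A_v)_v the matrix
A_0 (1 - \<Sum>_v e_v) + \<Sum>_v A_v e_v depends multiplicatively on the family (A_0, (A_v)_v).
S, S^* and P arise from A_0 = 0 and the partial permutation matrices of \<sigma>_v, of its inverse and of
the identity on Z(v), so the first four claims are identities between integer matrices.
Then U = S + (1 - SS^*) \<equiv> S + (1 - P) arises from A_0 = 1 and the permutation matrices of the \<sigma>_v,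
hence is invertible. Finally the permutation matrix of \<sigma>_v is a signed permutation matrix, which has
determinant 1 and is a product of elementary matrices over \<int>, times the diagonal matrix with sign \<sigma>_v
at a position reserved for v; the first family maps to an elementary matrix, the second one to
diag(sign(\<sigma>_v) e_v + 1 - e_v)_v.\<close>

section \<open>Matrices modulo a two-sided ideal\<close>

definition is_ideal :: "'a::ring_1 set \<Rightarrow> bool" where
  "is_ideal J \<longleftrightarrow> 0 \<in> J \<and> (\<forall>a\<in>J. \<forall>b\<in>J. a + b \<in> J) \<and> (\<forall>a\<in>J. \<forall>x. x * a \<in> J \<and> a * x \<in> J)"

lemma
  assumes "is_ideal J"
  shows ideal_zero: "0 \<in> J"
    and ideal_add: "a \<in> J \<Longrightarrow> b \<in> J \<Longrightarrow> a + b \<in> J"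
    and ideal_mult_left: "a \<in> J \<Longrightarrow> x * a \<in> J"
    and ideal_mult_right: "a \<in> J \<Longrightarrow> a * x \<in> J"
  using assms by (auto simp: is_ideal_def)

lemma ideal_uminus: "is_ideal J \<Longrightarrow> a \<in> J \<Longrightarrow> - a \<in> J"
  using ideal_mult_left[of J a "- 1"] by simp

lemma ideal_diff: "is_ideal J \<Longrightarrow> a \<in> J \<Longrightarrow> b \<in> J \<Longrightarrow> a - b \<in> J"
  using ideal_add[of J a "- b"] ideal_uminus[of J b] by simp

lemma ideal_sum: "is_ideal J \<Longrightarrow> (\<And>x. x \<in> A \<Longrightarrow> f x \<in> J) \<Longrightarrow> sum f A \<in> J"
  by (induction A rule: infinite_finite_induct) (auto simp: ideal_zero ideal_add)

lemma is_ideal_singleton_zero: "is_ideal {0}"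
  by (simp add: is_ideal_def)

lemma sum_fun_apply2: "(sum f A) i j = (\<Sum>x\<in>A. f x i j)"
  by (induction A rule: infinite_finite_induct) auto

lemma mmul_assoc: "mmul n (mmul n A B) C = mmul n A (mmul n B C)"
  unfolding mmul_def
  by (auto simp: fun_eq_iff sum_distrib_left sum_distrib_right mult.assoc intro: sum.swap)

lemma mmul_sparse_row:
  assumes "l \<in> {1..n}" and "\<And>l'. l' \<in> {1..n} \<Longrightarrow> l' \<noteq> l \<Longrightarrow> A i l' = 0"
  shows "mmul n A B i j = A i l * B l j"
  unfolding mmul_def using assms by (subst sum.remove[of _ l]) (auto intro: sum.neutral)

lemma mmul_sparse_col:
  assumes "l \<in> {1..n}" and "\<And>l'. l' \<in> {1..n} \<Longrightarrow> l' \<noteq> l \<Longrightarrow> B l' j = 0"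
  shows "mmul n A B i j = A i l * B l j"
  unfolding mmul_def using assms by (subst sum.remove[of _ l]) (auto intro: sum.neutral)

lemma mmul_mone_left:
  "i \<in> {1..n} \<Longrightarrow> mmul n mone B i j = (B i j :: 'a::semiring_1)"
  by (subst mmul_sparse_row[of i]) (auto simp: mone_def)

lemma mmul_mone_right:
  "j \<in> {1..n} \<Longrightarrow> mmul n A mone i j = (A i j :: 'a::semiring_1)"
  by (subst mmul_sparse_col[of j]) (auto simp: mone_def)

lemma mmul_elem_left:
  assumes "i \<in> {1..n}" and "q \<in> {1..n}"
  shows "mmul n (elem p q a) B i j = B i j + (if i = p then a * B q j else 0)"
proof -
  have "mmul n (elem p q a) B i j
      = (\<Sum>l\<in>{1..n}. (if l = i then B l j else 0) + (if i = p \<and> l = q then a * B l j else 0))"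
    unfolding mmul_def elem_def by (intro sum.cong) (auto simp: distrib_right)
  then show ?thesis
    using assms by (simp add: sum.distrib)
qed

lemma mcong_eq:
  "is_ideal J \<Longrightarrow> (\<And>i j. i \<in> {1..n} \<Longrightarrow> j \<in> {1..n} \<Longrightarrow> A i j = B i j) \<Longrightarrow> mcong J n A B"
  by (simp add: mcong_def ideal_zero)

lemma mcong_refl: "is_ideal J \<Longrightarrow> mcong J n A A"
  by (simp add: mcong_eq)

lemma mcong_sym:
  assumes "is_ideal J" and "mcong J n A B"
  shows "mcong J n B A"
  unfolding mcong_def
proof (intro ballI)
  fix i j assume "i \<in> {1..n}" "j \<in> {1..n}"
  then have "A i j - B i j \<in> J"
    using assms(2) unfolding mcong_def by blast
  then have "- (A i j - B i j) \<in> J"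
    by (rule ideal_uminus[OF assms(1)])
  then show "B i j - A i j \<in> J"
    by simp
qed

lemma mcong_trans:
  assumes "is_ideal J" and "mcong J n A B" and "mcong J n B C"
  shows "mcong J n A C"
  unfolding mcong_def
proof (intro ballI)
  fix i j assume "i \<in> {1..n}" "j \<in> {1..n}"
  then have "A i j - B i j \<in> J" and "B i j - C i j \<in> J"
    using assms(2,3) unfolding mcong_def by blast+
  then have "(A i j - B i j) + (B i j - C i j) \<in> J"
    by (rule ideal_add[OF assms(1)])
  then show "A i j - C i j \<in> J"
    by simp
qed

lemma mcong_add:
  assumes "is_ideal J" and "mcong J n A A'" and "mcong J n B B'"
  shows "mcong J n (A + B) (A' + B')"
  unfolding mcong_def
proof (intro ballI)
  fix i j assume "i \<in> {1..n}" "j \<in> {1..n}"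
  then have "(A i j - A' i j) + (B i j - B' i j) \<in> J"
    using assms unfolding mcong_def by (simp add: ideal_add)
  then show "(A + B) i j - (A' + B') i j \<in> J"
    by (simp add: algebra_simps)
qed

lemma mcong_diff:
  assumes "is_ideal J" and "mcong J n A A'" and "mcong J n B B'"
  shows "mcong J n (A - B) (A' - B')"
  unfolding mcong_def
proof (intro ballI)
  fix i j assume "i \<in> {1..n}" "j \<in> {1..n}"
  then have "(A i j - A' i j) - (B i j - B' i j) \<in> J"
    using assms unfolding mcong_def by (simp add: ideal_diff)
  then show "(A - B) i j - (A' - B') i j \<in> J"
    by (simp add: algebra_simps)
qed

lemma mcong_mmul:
  assumes J: "is_ideal J" and "mcong J n A A'" and "mcong J n B B'"
  shows "mcong J n (mmul n A B) (mmul n A' B')"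
  unfolding mcong_def
proof (intro ballI)
  fix i j assume "i \<in> {1..n}" "j \<in> {1..n}"
  have "mmul n A B i j - mmul n A' B' i j
      = (\<Sum>l\<in>{1..n}. (A i l - A' i l) * B l j + A' i l * (B l j - B' l j))"
    unfolding mmul_def by (simp add: sum_subtractf[symmetric] algebra_simps)
  also have "\<dots> \<in> J"
    using assms \<open>i \<in> {1..n}\<close> \<open>j \<in> {1..n}\<close> unfolding mcong_def
    by (intro ideal_sum ideal_add ideal_mult_left ideal_mult_right) auto
  finally show "mmul n A B i j - mmul n A' B' i j \<in> J" .
qed

lemma minvertible_mod_cong:
  assumes J: "is_ideal J" and "mcong J n U X" and "minvertible_mod J n X"
  shows "minvertible_mod J n U"
proof -
  obtain Y where "mcong J n (mmul n X Y) mone" "mcong J n (mmul n Y X) mone"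
    using assms(3) unfolding minvertible_mod_def by blast
  moreover have "mcong J n (mmul n U Y) (mmul n X Y)" "mcong J n (mmul n Y U) (mmul n Y X)"
    using assms(2) by (simp_all add: mcong_mmul[OF J] mcong_refl[OF J])
  ultimately show ?thesis
    unfolding minvertible_mod_def using mcong_trans[OF J] by blast
qed

definition elementary_mod :: "'a::ring_1 set \<Rightarrow> nat \<Rightarrow> (nat \<Rightarrow> nat \<Rightarrow> 'a) \<Rightarrow> bool" where
  "elementary_mod J n X \<longleftrightarrow> (\<exists>W\<in>elem_group n. mcong J n X W)"

lemma elementary_mod_cong:
  "is_ideal J \<Longrightarrow> mcong J n X Y \<Longrightarrow> elementary_mod J n Y \<Longrightarrow> elementary_mod J n X"
  unfolding elementary_mod_def using mcong_trans by blast

lemma elementary_mod_mone: "is_ideal J \<Longrightarrow> elementary_mod J n mone"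
  unfolding elementary_mod_def using elem_group.one mcong_refl by blast

lemma elementary_mod_elem_mmul:
  assumes J: "is_ideal J" and pq: "p \<in> {1..n}" "q \<in> {1..n}" "p \<noteq> q"
    and X: "elementary_mod J n X"
  shows "elementary_mod J n (mmul n (elem p q a) X)"
proof -
  obtain W where "W \<in> elem_group n" "mcong J n X W"
    using X unfolding elementary_mod_def by blast
  then show ?thesis
    unfolding elementary_mod_def
    using pq mcong_mmul[OF J mcong_refl[OF J]] by (blast intro: elem_group.step)
qed

lemma elementary_mod_elem:
  assumes J: "is_ideal J" and "p \<in> {1..n}" "q \<in> {1..n}" "p \<noteq> q"
  shows "elementary_mod J n (elem p q a)"
proof (rule elementary_mod_cong[OF J])
  show "elementary_mod J n (mmul n (elem p q a) mone)"
    using assms by (intro elementary_mod_elem_mmul elementary_mod_mone)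
  show "mcong J n (elem p q a) (mmul n (elem p q a) mone)"
    by (rule mcong_eq[OF J]) (simp add: mmul_mone_right)
qed

lemma elementary_mod_mmul:
  assumes J: "is_ideal J" and X: "elementary_mod J n X" and Y: "elementary_mod J n Y"
  shows "elementary_mod J n (mmul n X Y)"
proof -
  obtain W where W: "W \<in> elem_group n" "mcong J n X W"
    using X unfolding elementary_mod_def by blast
  from W(1) have "elementary_mod J n (mmul n W Y)"
  proof induction
    case one
    show ?case
      by (rule elementary_mod_cong[OF J _ Y], rule mcong_eq[OF J]) (simp add: mmul_mone_left)
  next
    case (step W p q a)
    then show ?case
      by (simp add: mmul_assoc elementary_mod_elem_mmul[OF J])
  qed
  then show ?thesis
    using elementary_mod_cong[OF J mcong_mmul[OF J W(2) mcong_refl[OF J]]] by blast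
qed

lemma k1_eqI:
  assumes J: "is_ideal J" and "max n n' \<le> m" and "elementary_mod J m W"
    and "mcong J m (mpad n U) (mmul m W (mpad n' D))"
  shows "k1_eq J n U n' D"
proof -
  obtain W' where "W' \<in> elem_group m" "mcong J m W W'"
    using assms(3) unfolding elementary_mod_def by blast
  then show ?thesis
    unfolding k1_eq_def
    using assms(2,4) mcong_trans[OF J _ mcong_mmul[OF J _ mcong_refl[OF J]]] by blast
qed

lemma k1_eq_cong:
  assumes J: "is_ideal J" and UX: "mcong J n U X" and "k1_eq J n X n' D"
  shows "k1_eq J n U n' D"
proof -
  obtain m W where m: "m \<ge> max n n'" "W \<in> elem_group m" "mcong J m (mpad n X) (mmul m W (mpad n' D))"
    using assms(3) unfolding k1_eq_def by blast
  have "mcong J m (mpad n U) (mpad n X)"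
    using UX ideal_zero[OF J] unfolding mcong_def mpad_def by auto
  then show ?thesis
    unfolding k1_eq_def using m mcong_trans[OF J] by blast
qed

section \<open>Permutation matrices and signed permutation matrices\<close>

definition perm_mat :: "nat set \<Rightarrow> (nat \<Rightarrow> nat) \<Rightarrow> nat \<Rightarrow> nat \<Rightarrow> int" where
  "perm_mat Z \<sigma> i j = (if i \<in> Z \<and> j = \<sigma> i then 1 else 0)"

lemma permutes_in_interval:
  assumes "\<sigma> permutes Y" and "Y \<subseteq> {1..n}" and "i \<in> {1..n}"
  shows "\<sigma> i \<in> {1..n}"
proof (cases "i \<in> Y")
  case True
  then show ?thesis
    using assms(2) permutes_in_image[OF assms(1)] by blast
next
  case False
  then show ?thesis
    using assms(3) permutes_not_in[OF assms(1)] by simp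
qed

lemma permutes_graph_converse:
  assumes "\<sigma> permutes Z"
  shows "j \<in> Z \<and> i = \<sigma> j \<longleftrightarrow> i \<in> Z \<and> j = inv \<sigma> i"
  using permutes_inverses[OF assms] permutes_in_image[OF assms] by metis

lemma mmul_perm_mat:
  assumes "\<sigma> permutes Y" and "Y \<subseteq> {1..n}" and "i \<in> {1..n}" and "\<sigma> ` Z \<subseteq> Z"
  shows "mmul n (perm_mat Z \<sigma>) (perm_mat Z \<tau>) i j = perm_mat Z (\<tau> \<circ> \<sigma>) i j"
  by (subst mmul_sparse_row[of "\<sigma> i"])
    (use assms permutes_in_interval[OF assms(1-3)] in \<open>auto simp: perm_mat_def\<close>)

lemma perm_mat_UNIV_id: "perm_mat UNIV id = mone"
  by (simp add: fun_eq_iff perm_mat_def mone_def)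

lemma perm_mat_UNIV_eq:
  assumes "\<sigma> permutes Z"
  shows "perm_mat UNIV \<sigma> = mone + perm_mat Z \<sigma> - perm_mat Z id"
  using permutes_not_in[OF assms] by (auto simp: fun_eq_iff perm_mat_def mone_def)

lemma perm_mat_UNIV_outside:
  assumes "\<sigma> permutes {1..n}" and "\<not> (i \<le> n \<and> j \<le> n)"
  shows "perm_mat UNIV \<sigma> i j = mone i j"
proof (cases "i \<in> {1..n}")
  case True
  then have "\<sigma> i \<in> {1..n}"
    using permutes_in_image[OF assms(1)] by blast
  then show ?thesis
    using True assms(2) by (auto simp: perm_mat_def mone_def)
next
  case False
  then show ?thesis
    using permutes_not_in[OF assms(1)] by (simp add: perm_mat_def mone_def)
qed

text \<open>The permutation matrix of q with its column k multiplied by sign q; it has determinant 1.\<close>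

definition signed_perm_mat :: "(nat \<Rightarrow> nat) \<Rightarrow> nat \<Rightarrow> nat \<Rightarrow> nat \<Rightarrow> int" where
  "signed_perm_mat q k i j = (if j = q i then if j = k then sign q else 1 else 0)"

definition diag_at :: "nat \<Rightarrow> int \<Rightarrow> nat \<Rightarrow> nat \<Rightarrow> int" where
  "diag_at k c i j = (if i = j then if i = k then c else 1 else 0)"

lemma signed_perm_mat_id: "signed_perm_mat id k = mone"
  by (simp add: fun_eq_iff signed_perm_mat_def mone_def)

lemma mmul_signed_perm_mat_diag_at:
  "j \<in> {1..n} \<Longrightarrow> mmul n (signed_perm_mat q k) (diag_at k (sign q)) i j = perm_mat UNIV q i j"
  by (subst mmul_sparse_col[of j]) (auto simp: signed_perm_mat_def diag_at_def perm_mat_def)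

lemma mmul_signed_perm_mat_left:
  assumes "q permutes {1..n}" and "i \<in> {1..n}"
  shows "mmul n (signed_perm_mat q c) B i j = signed_perm_mat q c i (q i) * B (q i) j"
  by (rule mmul_sparse_row)
    (use permutes_in_interval[OF assms(1) _ assms(2)] in \<open>auto simp: signed_perm_mat_def\<close>)

lemma mmul_signed_perm_mat:
  assumes p: "p permutes {1..n}" and q: "q permutes {1..n}" and i: "i \<in> {1..n}"
  shows "mmul n (signed_perm_mat q (inv p k)) (signed_perm_mat p k) i j = signed_perm_mat (p \<circ> q) k i j"
proof -
  have "sign (p \<circ> q) = sign p * sign q"
    using p q by (intro sign_compose permutes_imp_permutation[of "{1..n}"]) auto
  moreover have "q i = inv p k \<longleftrightarrow> p (q i) = k"
    using permutes_inverses[OF p] by metis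
  ultimately show ?thesis
    unfolding mmul_signed_perm_mat_left[OF q i] by (auto simp: signed_perm_mat_def)
qed

lemma elementary_signed_perm_mat_transpose_self:
  assumes ab: "a \<in> {1..n}" "b \<in> {1..n}" "a \<noteq> b"
  shows "elementary_mod {0::int} n (signed_perm_mat (Transposition.transpose a b) a)"
proof (rule elementary_mod_cong[OF is_ideal_singleton_zero])
  show "elementary_mod {0} n (mmul n (elem a b 1) (mmul n (elem b a (-1)) (elem a b 1)))"
    using ab by (intro elementary_mod_mmul is_ideal_singleton_zero elementary_mod_elem) auto
  show "mcong {0} n (signed_perm_mat (Transposition.transpose a b) a)
      (mmul n (elem a b 1) (mmul n (elem b a (-1)) (elem a b 1)))"
    using ab by (intro mcong_eq is_ideal_singleton_zero)
      (simp add: mmul_elem_left, auto simp: signed_perm_mat_def sign_swap_id transpose_def elem_def)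
qed

lemma elementary_signed_perm_mat_transpose:
  assumes a: "a \<in> {1..n}" and b: "b \<in> {1..n}" and k: "k \<in> {1..n}"
  shows "elementary_mod {0::int} n (signed_perm_mat (Transposition.transpose a b) k)"
proof -
  consider "a = b" | "a \<noteq> b" "k = a" | "a \<noteq> b" "k = b" | "a \<noteq> b" "k \<noteq> a" "k \<noteq> b"
    by blast
  then show ?thesis
  proof cases
    case 1
    then show ?thesis
      by (simp add: signed_perm_mat_id elementary_mod_mone[OF is_ideal_singleton_zero])
  next
    case 2
    then show ?thesis
      using elementary_signed_perm_mat_transpose_self[OF a b] by simp
  next
    case 3
    then show ?thesis
      using elementary_signed_perm_mat_transpose_self[OF b a] by (simp add: transpose_commute)
  next
    case 4
    let ?R = "\<lambda>x c. signed_perm_mat (Transposition.transpose a x) c"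
    \<comment> \<open>the square of ?R k a is diagonal with -1 exactly at a and k: it moves the sign of ?R b a from column a to k\<close>
    have "mcong {0} n (?R b k) (mmul n (?R b a) (mmul n (?R k a) (?R k a)))"
    proof (intro mcong_eq is_ideal_singleton_zero)
      fix i j assume ij: "i \<in> {1..n}" "j \<in> {1..n}"
      have tb: "Transposition.transpose a b permutes {1..n}" and tk: "Transposition.transpose a k permutes {1..n}"
        using a b k by (simp_all add: permutes_swap_id)
      show "?R b k i j = mmul n (?R b a) (mmul n (?R k a) (?R k a)) i j"
        unfolding mmul_signed_perm_mat_left[OF tb ij(1)]
          mmul_signed_perm_mat_left[OF tk permutes_in_interval[OF tb order_refl ij(1)]]
        using 4 by (cases "i = a"; cases "i = b"; cases "i = k")
          (auto simp: signed_perm_mat_def sign_swap_id transpose_def)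
    qed
    moreover have "elementary_mod {0} n (mmul n (?R b a) (mmul n (?R k a) (?R k a)))"
      using 4 a b k by (intro elementary_mod_mmul is_ideal_singleton_zero elementary_signed_perm_mat_transpose_self) auto
    ultimately show ?thesis
      by (rule elementary_mod_cong[OF is_ideal_singleton_zero])
  qed
qed

lemma elementary_signed_perm_mat:
  assumes "q permutes {1..n}" and k: "k \<in> {1..n}"
  shows "elementary_mod {0::int} n (signed_perm_mat q k)"
  using finite_atLeastAtMost assms(1)
proof (induction q rule: permutes_rev_induct)
  case id
  show ?case
    unfolding signed_perm_mat_id by (rule elementary_mod_mone[OF is_ideal_singleton_zero])
next
  case (swap a b p)
  let ?t = "Transposition.transpose a b"
  have "inv p k \<in> {1..n}"
    using permutes_in_image[OF permutes_inv[OF swap.hyps(4)]] k by blast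
  then have "elementary_mod {0} n (mmul n (signed_perm_mat ?t (inv p k)) (signed_perm_mat p k))"
    using swap by (intro elementary_mod_mmul is_ideal_singleton_zero elementary_signed_perm_mat_transpose) auto
  moreover have "mcong {0} n (signed_perm_mat (p \<circ> ?t) k) (mmul n (signed_perm_mat ?t (inv p k)) (signed_perm_mat p k))"
    using swap by (intro mcong_eq is_ideal_singleton_zero) (simp add: mmul_signed_perm_mat permutes_swap_id)
  ultimately show ?case
    by (rule elementary_mod_cong[OF is_ideal_singleton_zero, rotated])
qed

section \<open>Matrices over a family of orthogonal idempotents\<close>

definition orth_idempotents :: "'a::ring_1 set \<Rightarrow> ('v \<Rightarrow> 'a) \<Rightarrow> 'v set \<Rightarrow> bool" where
  "orth_idempotents J g V \<longleftrightarrow> (\<forall>v\<in>V. \<forall>w\<in>V. g v * g w - (if v = w then g v else 0) \<in> J)"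

lemma orth_idempotents_reindex:
  assumes "orth_idempotents J g (f ` K)" and "inj_on f K"
  shows "orth_idempotents J (g \<circ> f) K"
  unfolding orth_idempotents_def
proof (intro ballI)
  fix k l assume "k \<in> K" "l \<in> K"
  then have "g (f k) * g (f l) - (if f k = f l then g (f k) else 0) \<in> J"
    using assms(1) unfolding orth_idempotents_def by blast
  moreover have "f k = f l \<longleftrightarrow> k = l"
    using assms(2) \<open>k \<in> K\<close> \<open>l \<in> K\<close> by (auto dest: inj_onD)
  ultimately show "(g \<circ> f) k * (g \<circ> f) l - (if k = l then (g \<circ> f) k else 0) \<in> J"
    by (cases "k = l") simp_all
qed

text \<open>With e_v = g v, the entry c_0 (1 - \<Sum>_v e_v) + \<Sum>_v c_v e_v and the corresponding matrix.\<close>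

definition idem_comb :: "('v \<Rightarrow> 'a::ring_1) \<Rightarrow> 'v set \<Rightarrow> int \<Rightarrow> ('v \<Rightarrow> int) \<Rightarrow> 'a" where
  "idem_comb g V c0 c = of_int c0 + (\<Sum>v\<in>V. of_int (c v - c0) * g v)"

definition idem_mat ::
  "('v \<Rightarrow> 'a::ring_1) \<Rightarrow> 'v set \<Rightarrow> (nat \<Rightarrow> nat \<Rightarrow> int) \<Rightarrow> ('v \<Rightarrow> nat \<Rightarrow> nat \<Rightarrow> int) \<Rightarrow> nat \<Rightarrow> nat \<Rightarrow> 'a"
  where "idem_mat g V A0 A = (\<lambda>i j. idem_comb g V (A0 i j) (\<lambda>v. A v i j))"

lemma idem_comb_mult:
  assumes J: "is_ideal J" and fin: "finite V" and orth: "orth_idempotents J g V"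
  shows "idem_comb g V c0 c * idem_comb g V d0 d - idem_comb g V (c0 * d0) (\<lambda>v. c v * d v) \<in> J"
proof -
  define a where "a v = c v - c0" for v
  define b where "b v = d v - d0" for v
  define C where "C = (\<Sum>v\<in>V. of_int (a v) * g v)"
  define D where "D = (\<Sum>v\<in>V. of_int (b v) * g v)"
  have c0D: "of_int c0 * D = (\<Sum>v\<in>V. of_int (c0 * b v) * g v)"
    unfolding D_def by (simp add: sum_distrib_left mult.assoc)
  have Cd0: "C * of_int d0 = (\<Sum>v\<in>V. of_int (a v * d0) * g v)"
    unfolding C_def sum_distrib_right
    by (intro sum.cong refl) (metis mult.assoc mult_of_int_commute of_int_mult)
  have CD: "C * D = (\<Sum>v\<in>V. \<Sum>w\<in>V. of_int (a v * b w) * (g v * g w))"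
    unfolding C_def D_def sum_product
    by (intro sum.cong refl) (metis mult.assoc mult_of_int_commute of_int_mult)
  have diag: "(\<Sum>v\<in>V. of_int (a v * b v) * g v)
      = (\<Sum>v\<in>V. \<Sum>w\<in>V. of_int (a v * b w) * (if v = w then g v else 0))"
    using fin by (simp add: if_distrib cong: if_cong)
  have "c v * d v - c0 * d0 = c0 * b v + a v * d0 + a v * b v" for v
    unfolding a_def b_def by (simp add: algebra_simps)
  then have "idem_comb g V (c0 * d0) (\<lambda>v. c v * d v)
      = of_int c0 * of_int d0 + of_int c0 * D + C * of_int d0 + (\<Sum>v\<in>V. of_int (a v * b v) * g v)"
    unfolding idem_comb_def c0D Cd0 by (simp add: distrib_right sum.distrib add.assoc)
  moreover have "idem_comb g V c0 c * idem_comb g V d0 d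
      = of_int c0 * of_int d0 + of_int c0 * D + C * of_int d0 + C * D"
    unfolding idem_comb_def a_def[symmetric] b_def[symmetric] C_def[symmetric] D_def[symmetric]
    by (simp add: distrib_left distrib_right add.assoc)
  ultimately have "idem_comb g V c0 c * idem_comb g V d0 d - idem_comb g V (c0 * d0) (\<lambda>v. c v * d v)
      = (\<Sum>v\<in>V. \<Sum>w\<in>V. of_int (a v * b w) * (g v * g w - (if v = w then g v else 0)))"
    unfolding CD diag by (simp add: right_diff_distrib sum_subtractf)
  also have "\<dots> \<in> J"
    using orth unfolding orth_idempotents_def by (intro ideal_sum[OF J] ideal_mult_left[OF J]) auto
  finally show ?thesis .
qed

lemma idem_comb_sum:
  "finite L \<Longrightarrow> (\<Sum>l\<in>L. idem_comb g V (a l) (c l)) = idem_comb g V (\<Sum>l\<in>L. a l) (\<lambda>v. \<Sum>l\<in>L. c l v)"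
  unfolding idem_comb_def
  by (simp add: sum.distrib sum_distrib_right sum_subtractf left_diff_distrib sum.swap[of _ L])

lemma idem_mat_mult:
  assumes J: "is_ideal J" and fin: "finite V" and orth: "orth_idempotents J g V"
  shows "mcong J n (mmul n (idem_mat g V A0 A) (idem_mat g V B0 B))
      (idem_mat g V (mmul n A0 B0) (\<lambda>v. mmul n (A v) (B v)))"
  unfolding mcong_def
proof (intro ballI)
  fix i j
  define T where "T l = idem_comb g V (A0 i l * B0 l j) (\<lambda>v. A v i l * B v l j)" for l
  have "mmul n (idem_mat g V A0 A) (idem_mat g V B0 B) i j - (\<Sum>l\<in>{1..n}. T l)
      = (\<Sum>l\<in>{1..n}. idem_mat g V A0 A i l * idem_mat g V B0 B l j - T l)"
    unfolding mmul_def by (simp add: sum_subtractf)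
  also have "\<dots> \<in> J"
    unfolding idem_mat_def T_def by (intro ideal_sum[OF J] idem_comb_mult[OF J fin orth])
  also have "(\<Sum>l\<in>{1..n}. T l) = idem_mat g V (mmul n A0 B0) (\<lambda>v. mmul n (A v) (B v)) i j"
    unfolding T_def idem_mat_def mmul_def by (simp add: idem_comb_sum)
  finally show "mmul n (idem_mat g V A0 A) (idem_mat g V B0 B) i j
      - idem_mat g V (mmul n A0 B0) (\<lambda>v. mmul n (A v) (B v)) i j \<in> J" .
qed

lemma idem_mat_cong:
  "A0 i j = A0' i j \<Longrightarrow> (\<And>v. v \<in> V \<Longrightarrow> A v i j = A' v i j) \<Longrightarrow>
    idem_mat g V A0 A i j = idem_mat g V A0' A' i j"
  unfolding idem_mat_def idem_comb_def by (simp cong: sum.cong)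

lemma idem_mat_family_cong:
  "(\<And>v. v \<in> V \<Longrightarrow> A v = A' v) \<Longrightarrow> idem_mat g V A0 A = idem_mat g V A0 A'"
  unfolding idem_mat_def idem_comb_def by (simp cong: sum.cong)

lemma idem_mat_const_entry:
  "(\<And>v. v \<in> V \<Longrightarrow> A v i j = A0 i j) \<Longrightarrow> idem_mat g V A0 A i j = of_int (A0 i j)"
  unfolding idem_mat_def idem_comb_def by simp

lemma idem_mat_mone: "idem_mat g V mone (\<lambda>v. mone) = mone"
  by (simp add: fun_eq_iff idem_mat_const_entry mone_def)

lemma idem_mat_reindex:
  "inj_on f K \<Longrightarrow> idem_mat g (f ` K) A0 A = idem_mat (g \<circ> f) K A0 (A \<circ> f)"
  by (simp add: fun_eq_iff idem_mat_def idem_comb_def sum.reindex)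

lemma idem_mat_single_elem:
  assumes "finite V" and "w \<in> V" and "p \<noteq> q"
  shows "idem_mat g V mone (\<lambda>v. if v = w then elem p q a else mone) = elem p q (of_int a * g w)"
proof (intro ext)
  fix i j
  have "(\<Sum>v\<in>V. of_int ((if v = w then elem p q a else mone) i j - mone i j) * g v)
      = (\<Sum>v\<in>V. if v = w then of_int (elem p q a i j - mone i j) * g w else 0)"
    by (intro sum.cong) auto
  also have "\<dots> = of_int (elem p q a i j - mone i j) * g w"
    using assms(1,2) by simp
  finally show "idem_mat g V mone (\<lambda>v. if v = w then elem p q a else mone) i j = elem p q (of_int a * g w) i j"
    using assms(3) unfolding idem_mat_def idem_comb_def by (auto simp: elem_def mone_def)
qed

lemma elementary_mod_idem_mat_single:
  assumes J: "is_ideal J" and fin: "finite V" and orth: "orth_idempotents J g V" and w: "w \<in> V"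
    and X: "X \<in> elem_group n"
  shows "elementary_mod J n (idem_mat g V mone (\<lambda>v. if v = w then X else mone))"
  using X
proof induction
  case one
  then show ?case
    using elementary_mod_mone[OF J] by (simp add: idem_mat_mone)
next
  case (step W p q a)
  note mcong_trans[OF J, trans]
  have "mcong J n (idem_mat g V mone (\<lambda>v. if v = w then mmul n (elem p q a) W else mone))
      (idem_mat g V (mmul n mone mone)
        (\<lambda>v. mmul n (if v = w then elem p q a else mone) (if v = w then W else mone)))"
    by (intro mcong_eq[OF J] idem_mat_cong) (auto simp: mmul_mone_left)
  also have "mcong J n \<dots> (mmul n (idem_mat g V mone (\<lambda>v. if v = w then elem p q a else mone))
      (idem_mat g V mone (\<lambda>v. if v = w then W else mone)))"
    by (rule mcong_sym[OF J idem_mat_mult[OF J fin orth]])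
  also have "\<dots> = mmul n (elem p q (of_int a * g w)) (idem_mat g V mone (\<lambda>v. if v = w then W else mone))"
    using fin w step(4) by (simp add: idem_mat_single_elem)
  finally show ?case
    by (rule elementary_mod_cong[OF J]) (use step in \<open>auto intro: elementary_mod_elem_mmul[OF J]\<close>)
qed

lemma elementary_mod_idem_mat:
  assumes J: "is_ideal J" and fin: "finite V" and orth: "orth_idempotents J g V"
    and A: "\<And>v. v \<in> V \<Longrightarrow> elementary_mod {0::int} n (A v)"
  shows "elementary_mod J n (idem_mat g V mone A)"
proof -
  note mcong_trans[OF J, trans]
  obtain W where W: "\<And>v. v \<in> V \<Longrightarrow> W v \<in> elem_group n \<and> mcong {0} n (A v) (W v)"
    using A unfolding elementary_mod_def by metis
  have "elementary_mod J n (idem_mat g V mone (\<lambda>v. if v \<in> F then W v else mone))" if "F \<subseteq> V" for F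
    using finite_subset[OF that fin] that
  proof (induction F rule: finite_subset_induct)
    case empty
    then show ?case
      using elementary_mod_mone[OF J] by (simp add: idem_mat_mone)
  next
    case (insert w F)
    have "mcong J n (idem_mat g V mone (\<lambda>v. if v \<in> insert w F then W v else mone))
        (idem_mat g V (mmul n mone mone)
          (\<lambda>v. mmul n (if v = w then W w else mone) (if v \<in> F then W v else mone)))"
      using insert.hyps(3) by (intro mcong_eq[OF J] idem_mat_cong) (auto simp: mmul_mone_left mmul_mone_right)
    also have "mcong J n \<dots> (mmul n (idem_mat g V mone (\<lambda>v. if v = w then W w else mone))
        (idem_mat g V mone (\<lambda>v. if v \<in> F then W v else mone)))"
      by (rule mcong_sym[OF J idem_mat_mult[OF J fin orth]])
    finally show ?case
      by (rule elementary_mod_cong[OF J])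
        (use insert W in \<open>auto intro: elementary_mod_mmul[OF J] elementary_mod_idem_mat_single[OF J fin orth]\<close>)
  qed
  moreover have "mcong J n (idem_mat g V mone A) (idem_mat g V mone (\<lambda>v. if v \<in> V then W v else mone))"
    using W by (intro mcong_eq[OF J] idem_mat_cong) (auto simp: mcong_def)
  ultimately show ?thesis
    using elementary_mod_cong[OF J] by blast
qed

lemma idem_mat_zero_perm_mat_apply:
  "idem_mat g V 0 (\<lambda>v. perm_mat (Z v) (\<sigma> v)) i j = (\<Sum>v\<in>V. if i \<in> Z v \<and> j = \<sigma> v i then g v else 0)"
  unfolding idem_mat_def idem_comb_def perm_mat_def by (auto intro!: sum.cong)

lemma idem_mat_perm_mat_mult:
  assumes J: "is_ideal J" and fin: "finite V" and orth: "orth_idempotents J g V"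
    and M: "\<And>i j. i \<in> {1..n} \<Longrightarrow> mmul n M M i j = M i j"
    and \<sigma>: "\<And>v. v \<in> V \<Longrightarrow> \<sigma> v permutes {1..n}" and Z: "\<And>v. v \<in> V \<Longrightarrow> \<sigma> v ` Z v \<subseteq> Z v"
  shows "mcong J n (mmul n (idem_mat g V M (\<lambda>v. perm_mat (Z v) (\<sigma> v))) (idem_mat g V M (\<lambda>v. perm_mat (Z v) (\<tau> v))))
      (idem_mat g V M (\<lambda>v. perm_mat (Z v) (\<tau> v \<circ> \<sigma> v)))"
  by (rule mcong_trans[OF J idem_mat_mult[OF J fin orth]], intro mcong_eq[OF J] idem_mat_cong)
    (simp_all add: M mmul_perm_mat[OF \<sigma> order_refl] Z)

lemma idem_mat_perm_mat_partial_isometry: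
  assumes J: "is_ideal J" and fin: "finite V" and orth: "orth_idempotents J g V"
    and Z: "\<And>v. v \<in> V \<Longrightarrow> Z v \<subseteq> {1..n}" and \<sigma>: "\<And>v. v \<in> V \<Longrightarrow> \<sigma> v permutes Z v"
  defines "S \<equiv> idem_mat g V 0 (\<lambda>v. perm_mat (Z v) (\<sigma> v))"
    and "S' \<equiv> idem_mat g V 0 (\<lambda>v. perm_mat (Z v) (inv (\<sigma> v)))"
    and "P \<equiv> idem_mat g V 0 (\<lambda>v. perm_mat (Z v) id)"
  shows "mcong J n (mmul n S S') P" and "mcong J n (mmul n S' S) P" and "mcong J n (mmul n P P) P"
proof -
  have mult: "mcong J n (mmul n (idem_mat g V 0 (\<lambda>v. perm_mat (Z v) (\<rho> v)))
      (idem_mat g V 0 (\<lambda>v. perm_mat (Z v) (\<tau> v)))) (idem_mat g V 0 (\<lambda>v. perm_mat (Z v) (\<tau> v \<circ> \<rho> v)))"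
    if "\<And>v. v \<in> V \<Longrightarrow> \<rho> v permutes Z v" for \<rho> \<tau>
    using that permutes_subset[OF that Z]
    by (intro idem_mat_perm_mat_mult[OF J fin orth]) (auto simp: mmul_def permutes_image)
  have "idem_mat g V 0 (\<lambda>v. perm_mat (Z v) (inv (\<sigma> v) \<circ> \<sigma> v)) = P"
    and "idem_mat g V 0 (\<lambda>v. perm_mat (Z v) (\<sigma> v \<circ> inv (\<sigma> v))) = P"
    unfolding P_def using permutes_inv_o[OF \<sigma>] by (auto intro: idem_mat_family_cong)
  then show "mcong J n (mmul n S S') P" and "mcong J n (mmul n S' S) P"
    using mult[OF \<sigma>, of "\<lambda>v. inv (\<sigma> v)"] mult[OF permutes_inv[OF \<sigma>], of \<sigma>]
    unfolding S_def S'_def by simp_all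
  show "mcong J n (mmul n P P) P"
    using mult[of "\<lambda>v. id" "\<lambda>v. id"] unfolding P_def by (simp add: permutes_id)
qed

lemma idem_mat_perm_mat_complement:
  assumes "\<And>v. v \<in> V \<Longrightarrow> \<sigma> v permutes Z v"
  shows "idem_mat g V 0 (\<lambda>v. perm_mat (Z v) (\<sigma> v)) + (mone - idem_mat g V 0 (\<lambda>v. perm_mat (Z v) id))
    = idem_mat g V mone (\<lambda>v. perm_mat UNIV (\<sigma> v))"
proof (intro ext)
  fix i j
  have "(\<Sum>v\<in>V. of_int (perm_mat UNIV (\<sigma> v) i j - mone i j) * g v)
      = (\<Sum>v\<in>V. of_int (perm_mat (Z v) (\<sigma> v) i j - perm_mat (Z v) id i j) * g v)"
    using perm_mat_UNIV_eq[OF assms] by (intro sum.cong) auto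
  also have "\<dots> = (\<Sum>v\<in>V. of_int (perm_mat (Z v) (\<sigma> v) i j) * g v)
      - (\<Sum>v\<in>V. of_int (perm_mat (Z v) id i j) * g v)"
    by (simp add: sum_subtractf left_diff_distrib)
  finally show "(idem_mat g V 0 (\<lambda>v. perm_mat (Z v) (\<sigma> v)) + (mone - idem_mat g V 0 (\<lambda>v. perm_mat (Z v) id))) i j
      = idem_mat g V mone (\<lambda>v. perm_mat UNIV (\<sigma> v)) i j"
    unfolding idem_mat_def idem_comb_def by (simp add: mone_def)
qed

lemma idem_mat_perm_mat_mult_inverse:
  assumes J: "is_ideal J" and fin: "finite V" and orth: "orth_idempotents J g V"
    and \<sigma>: "\<And>v. v \<in> V \<Longrightarrow> \<sigma> v permutes {1..n}" and \<tau>: "\<And>v. v \<in> V \<Longrightarrow> \<tau> v \<circ> \<sigma> v = id"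
  shows "mcong J n (mmul n (idem_mat g V mone (\<lambda>v. perm_mat UNIV (\<sigma> v)))
      (idem_mat g V mone (\<lambda>v. perm_mat UNIV (\<tau> v)))) mone"
proof -
  have "mcong J n (mmul n (idem_mat g V mone (\<lambda>v. perm_mat UNIV (\<sigma> v)))
      (idem_mat g V mone (\<lambda>v. perm_mat UNIV (\<tau> v)))) (idem_mat g V mone (\<lambda>v. perm_mat UNIV (\<tau> v \<circ> \<sigma> v)))"
    using \<sigma> by (intro idem_mat_perm_mat_mult[OF J fin orth]) (simp_all add: mmul_mone_left)
  also have "idem_mat g V mone (\<lambda>v. perm_mat UNIV (\<tau> v \<circ> \<sigma> v)) = idem_mat g V mone (\<lambda>v. mone)"
    using \<tau> unfolding idem_mat_def idem_comb_def by (simp add: perm_mat_UNIV_id cong: sum.cong)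
  also have "\<dots> = mone"
    by (rule idem_mat_mone)
  finally show ?thesis .
qed

lemma minvertible_mod_idem_mat_perm_mat:
  assumes J: "is_ideal J" and fin: "finite V" and orth: "orth_idempotents J g V"
    and \<sigma>: "\<And>v. v \<in> V \<Longrightarrow> \<sigma> v permutes {1..n}"
  shows "minvertible_mod J n (idem_mat g V mone (\<lambda>v. perm_mat UNIV (\<sigma> v)))"
  unfolding minvertible_mod_def
proof (intro exI conjI)
  show "mcong J n (mmul n (idem_mat g V mone (\<lambda>v. perm_mat UNIV (\<sigma> v)))
      (idem_mat g V mone (\<lambda>v. perm_mat UNIV (inv (\<sigma> v))))) mone"
    using \<sigma> permutes_inv_o(2)[OF \<sigma>] by (intro idem_mat_perm_mat_mult_inverse[OF J fin orth]) blast+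
  show "mcong J n (mmul n (idem_mat g V mone (\<lambda>v. perm_mat UNIV (inv (\<sigma> v))))
      (idem_mat g V mone (\<lambda>v. perm_mat UNIV (\<sigma> v)))) mone"
    using permutes_inv[OF \<sigma>] permutes_inv_o(1)[OF \<sigma>]
    by (intro idem_mat_perm_mat_mult_inverse[OF J fin orth]) blast+
qed

lemma mpad_idem_mat_perm_mat:
  assumes "\<And>v. v \<in> V \<Longrightarrow> \<sigma> v permutes {1..n}"
  shows "mpad n (idem_mat g V mone (\<lambda>v. perm_mat UNIV (\<sigma> v))) = idem_mat g V mone (\<lambda>v. perm_mat UNIV (\<sigma> v))"
proof (intro ext)
  fix i j
  show "mpad n (idem_mat g V mone (\<lambda>v. perm_mat UNIV (\<sigma> v))) i j = idem_mat g V mone (\<lambda>v. perm_mat UNIV (\<sigma> v)) i j"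
  proof (cases "i \<le> n \<and> j \<le> n")
    case False
    then have "idem_mat g V mone (\<lambda>v. perm_mat UNIV (\<sigma> v)) i j = of_int (mone i j)"
      using False assms by (intro idem_mat_const_entry perm_mat_UNIV_outside[where n = n]) auto
    then show ?thesis
      using False by (simp add: mpad_def mone_def)
  qed (simp add: mpad_def)
qed

lemma idem_mat_diag_at_Suc:
  "idem_mat g {..<N} mone (\<lambda>k. diag_at (Suc k) (c k)) i j
    = (if i = j \<and> 1 \<le> i \<and> i \<le> N then 1 + of_int (c (i - 1) - 1) * g (i - 1) else mone i j)"
proof -
  have "(\<Sum>k<N. of_int (diag_at (Suc k) (c k) i j - mone i j) * g k)
      = (\<Sum>k<N. if i = j \<and> 1 \<le> i then (if k = i - 1 then of_int (c k - 1) * g k else 0) else 0)"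
    by (intro sum.cong) (auto simp: diag_at_def mone_def)
  also have "\<dots> = (if i = j \<and> 1 \<le> i \<and> i \<le> N then of_int (c (i - 1) - 1) * g (i - 1) else 0)"
    by (cases "i = j \<and> 1 \<le> i") auto
  finally show ?thesis
    unfolding idem_mat_def idem_comb_def by (auto simp: mone_def)
qed

lemma k1_eq_idem_mat_perm_mat:
  assumes J: "is_ideal J" and orth: "orth_idempotents J g (set vs)" and vs: "distinct vs"
    and \<sigma>: "\<And>v. v \<in> set vs \<Longrightarrow> \<sigma> v permutes {1..n}"
  shows "k1_eq J n (idem_mat g (set vs) mone (\<lambda>v. perm_mat UNIV (\<sigma> v))) (length vs)
    (mdiag (map (\<lambda>v. of_int (sign (\<sigma> v)) * g v + (1 - g v)) vs))"
proof -
  note mcong_trans[OF J, trans]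
  define N where "N = length vs"
  define m where "m = max n N"
  define G where "G = g \<circ> nth vs"
  define s where "s k = \<sigma> (vs ! k)" for k
  define R where "R = idem_mat G {..<N} mone (\<lambda>k. signed_perm_mat (s k) (Suc k))"
  have inj: "inj_on (nth vs) {..<N}"
    using vs by (simp add: inj_on_nth N_def)
  have img: "nth vs ` {..<N} = set vs"
    by (auto simp: N_def in_set_conv_nth)
  have orthG: "orth_idempotents J G {..<N}"
    unfolding G_def by (rule orth_idempotents_reindex[OF orth[folded img] inj])
  have s: "s k permutes {1..m}" if "k < N" for k
    using permutes_subset[OF \<sigma>[of "vs ! k"], of "{1..m}"] that by (auto simp: s_def m_def N_def)
  have "mpad n (idem_mat g (set vs) mone (\<lambda>v. perm_mat UNIV (\<sigma> v)))
      = idem_mat g (set vs) mone (\<lambda>v. perm_mat UNIV (\<sigma> v))"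
    by (rule mpad_idem_mat_perm_mat) (fact \<sigma>)
  also have "\<dots> = idem_mat G {..<N} mone (\<lambda>k. perm_mat UNIV (s k))"
    unfolding img[symmetric] idem_mat_reindex[OF inj] by (simp add: G_def s_def comp_def)
  finally have lhs: "mpad n (idem_mat g (set vs) mone (\<lambda>v. perm_mat UNIV (\<sigma> v)))
      = idem_mat G {..<N} mone (\<lambda>k. perm_mat UNIV (s k))" .
  have rhs: "idem_mat G {..<N} mone (\<lambda>k. diag_at (Suc k) (sign (s k)))
      = mpad N (mdiag (map (\<lambda>v. of_int (sign (\<sigma> v)) * g v + (1 - g v)) vs))"
    unfolding fun_eq_iff idem_mat_diag_at_Suc
    by (auto simp: mpad_def mdiag_def mone_def G_def s_def N_def algebra_simps)
  have "mcong J m (idem_mat G {..<N} mone (\<lambda>k. perm_mat UNIV (s k)))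
      (idem_mat G {..<N} (mmul m mone mone)
        (\<lambda>k. mmul m (signed_perm_mat (s k) (Suc k)) (diag_at (Suc k) (sign (s k)))))"
    by (intro mcong_eq[OF J] idem_mat_cong) (simp_all add: mmul_mone_left mmul_signed_perm_mat_diag_at)
  also have "mcong J m \<dots> (mmul m R (idem_mat G {..<N} mone (\<lambda>k. diag_at (Suc k) (sign (s k)))))"
    unfolding R_def by (rule mcong_sym[OF J idem_mat_mult[OF J _ orthG]]) simp
  finally have "mcong J m (mpad n (idem_mat g (set vs) mone (\<lambda>v. perm_mat UNIV (\<sigma> v))))
      (mmul m R (mpad N (mdiag (map (\<lambda>v. of_int (sign (\<sigma> v)) * g v + (1 - g v)) vs))))"
    unfolding lhs rhs .
  moreover have "elementary_mod J m R"
    unfolding R_def using s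
    by (intro elementary_mod_idem_mat[OF J _ orthG] elementary_signed_perm_mat) (auto simp: m_def)
  ultimately show ?thesis
    unfolding N_def by (intro k1_eqI[OF J _ \<open>elementary_mod J m R\<close>]) (simp_all add: m_def N_def)
qed

section \<open>Vertex matrices in the Leavitt path algebra\<close>

lemma is_ideal_lp_ideal: "is_ideal (lp_ideal s r)"
  by (auto simp: is_ideal_def intro: lp_ideal.intros)

lemma orth_idempotents_lp_ideal: "orth_idempotents (lp_ideal s r) (\<lambda>v. gen (Vx v)) V"
  unfolding orth_idempotents_def by (blast intro: lp_ideal.rel_vv)

lemma lpstar_gen_Vx: "lpstar (gen (Vx v)) = gen (Vx v)"
  by (simp add: lpstar_def gen_def)

lemma lpstar_sum_gen_Vx:
  assumes "finite V" and "\<And>v w. v \<in> V \<Longrightarrow> w \<in> V \<Longrightarrow> P v \<Longrightarrow> P w \<Longrightarrow> v = w"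
  shows "lpstar (\<Sum>v\<in>V. if P v then gen (Vx v) else 0 :: ('v, 'e, 'k::field) freealg)
    = (\<Sum>v\<in>V. if P v then gen (Vx v) else 0)"
proof (cases "\<exists>v\<in>V. P v")
  case True
  then obtain v0 where v0: "v0 \<in> V" "P v0"
    by blast
  then have "(\<Sum>v\<in>V. if P v then gen (Vx v) else 0 :: ('v, 'e, 'k::field) freealg)
      = (\<Sum>v\<in>V. if v = v0 then gen (Vx v0) else 0)"
    using assms(2) by (intro sum.cong) auto
  also have "\<dots> = gen (Vx v0)"
    using assms(1) v0 by simp
  finally show ?thesis
    by (simp add: lpstar_gen_Vx)
next
  case False
  then show ?thesis
    by (simp add: lpstar_def)
qed

lemma mstar_idem_mat_perm_mat:
  assumes fin: "finite V" and disj: "\<And>v w. v \<in> V \<Longrightarrow> w \<in> V \<Longrightarrow> v \<noteq> w \<Longrightarrow> Z v \<inter> Z w = {}"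
    and \<sigma>: "\<And>v. v \<in> V \<Longrightarrow> \<sigma> v permutes Z v"
  shows "mstar (idem_mat (\<lambda>v. gen (Vx v) :: ('v, 'e, 'k::field) freealg) V 0 (\<lambda>v. perm_mat (Z v) (\<sigma> v)))
    = idem_mat (\<lambda>v. gen (Vx v)) V 0 (\<lambda>v. perm_mat (Z v) (inv (\<sigma> v)))"
proof (intro ext)
  fix i j
  let ?g = "\<lambda>v. gen (Vx v) :: ('v, 'e, 'k) freealg"
  have "mstar (idem_mat ?g V 0 (\<lambda>v. perm_mat (Z v) (\<sigma> v))) i j
      = lpstar (\<Sum>v\<in>V. if j \<in> Z v \<and> i = \<sigma> v j then ?g v else 0)"
    by (simp add: mstar_def idem_mat_zero_perm_mat_apply)
  also have "\<dots> = (\<Sum>v\<in>V. if j \<in> Z v \<and> i = \<sigma> v j then ?g v else 0)"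
    using disj by (intro lpstar_sum_gen_Vx fin) blast
  also have "\<dots> = (\<Sum>v\<in>V. if i \<in> Z v \<and> j = inv (\<sigma> v) i then ?g v else 0)"
    using permutes_graph_converse[OF \<sigma>] by (intro sum.cong) auto
  finally show "mstar (idem_mat ?g V 0 (\<lambda>v. perm_mat (Z v) (\<sigma> v))) i j
      = idem_mat ?g V 0 (\<lambda>v. perm_mat (Z v) (inv (\<sigma> v))) i j"
    by (simp add: idem_mat_zero_perm_mat_apply)
qed

lemma sum_munit_eq_idem_mat:
  assumes "finite W" and "{v. Z v \<noteq> {}} \<subseteq> W" and "\<And>v. finite (Z v)"
  shows "(\<Sum>v\<in>{v. Z v \<noteq> {}}. \<Sum>t\<in>Z v. munit (g v) t (\<sigma> v t)) = idem_mat g W 0 (\<lambda>v. perm_mat (Z v) (\<sigma> v))"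
proof (intro ext)
  fix i j
  have "(\<Sum>t\<in>Z v. munit (g v) t (\<sigma> v t) i j) = (if i \<in> Z v \<and> j = \<sigma> v i then g v else 0)" for v
  proof -
    have "(\<Sum>t\<in>Z v. munit (g v) t (\<sigma> v t) i j) = (\<Sum>t\<in>Z v. if t = i then if j = \<sigma> v i then g v else 0 else 0)"
      by (intro sum.cong) (auto simp: munit_def)
    then show ?thesis
      using assms(3) by simp
  qed
  then have "(\<Sum>v\<in>{v. Z v \<noteq> {}}. \<Sum>t\<in>Z v. munit (g v) t (\<sigma> v t)) i j
      = (\<Sum>v\<in>{v. Z v \<noteq> {}}. if i \<in> Z v \<and> j = \<sigma> v i then g v else 0)"
    by (simp add: sum_fun_apply2)
  also have "\<dots> = (\<Sum>v\<in>W. if i \<in> Z v \<and> j = \<sigma> v i then g v else 0)"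
    using assms(1,2) by (intro sum.mono_neutral_left) auto
  finally show "(\<Sum>v\<in>{v. Z v \<noteq> {}}. \<Sum>t\<in>Z v. munit (g v) t (\<sigma> v t)) i j
      = idem_mat g W 0 (\<lambda>v. perm_mat (Z v) (\<sigma> v)) i j"
    by (simp add: idem_mat_zero_perm_mat_apply)
qed

lemma finite_nonempty_disjoint:
  assumes "finite A" and "\<And>v. Z v \<subseteq> A" and "\<And>v w. v \<noteq> w \<Longrightarrow> Z v \<inter> Z w = {}"
  shows "finite {v. Z v \<noteq> {}}"
proof -
  have "inj_on Z {v. Z v \<noteq> {}}"
    using assms(3) by (fastforce simp: inj_on_def)
  moreover have "Z ` {v. Z v \<noteq> {}} \<subseteq> Pow A"
    using assms(2) by blast
  ultimately show ?thesis
    using assms(1) by (meson finite_Pow_iff finite_imageD finite_subset)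
qed

theorem lemma5p4:
  fixes s r :: "'e \<Rightarrow> 'v"
    and Z :: "'v \<Rightarrow> nat set"
    and \<sigma>v :: "'v \<Rightarrow> nat \<Rightarrow> nat"
    and h :: nat
  assumes row_finite: "\<forall>v. finite {e. s e = v}"
    and h_pos: "h > 0"
    and Z_cover: "(\<Union>v. Z v) = {1..h}"
    and Z_disj: "\<forall>v w. v \<noteq> w \<longrightarrow> Z v \<inter> Z w = {}"
    and perm: "\<forall>v. \<sigma>v v permutes Z v"
  defines "J \<equiv> (lp_ideal s r :: ('v, 'e, 'k::field) freealg set)"
    and "S \<equiv> (\<Sum>v\<in>{v. Z v \<noteq> {}}. \<Sum>t\<in>Z v. munit (gen (Vx v)) t (\<sigma>v v t))"
    and "P \<equiv> (\<Sum>v\<in>{v. Z v \<noteq> {}}. \<Sum>t\<in>Z v. munit (gen (Vx v)) t t)"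
  shows "let U = S + (mone - mmul h S (mstar S)) in
         mcong J h (mmul h S (mstar S)) P \<and> mcong J h (mmul h (mstar S) S) P
         \<and> mcong J h (mmul h P P) P \<and> mcong J h (mstar P) P
         \<and> minvertible_mod J h U
         \<and> (\<forall>vs. distinct vs \<and> {v. Z v \<noteq> {}} \<subseteq> set vs \<longrightarrow>
              k1_eq J h U (length vs)
                (mdiag (map (\<lambda>v. of_int (sign (\<sigma>v v)) * gen (Vx v) + (1 - gen (Vx v))) vs)))"
proof -
  define g where "g v = (gen (Vx v) :: ('v, 'e, 'k) freealg)" for v
  define V where "V = {v. Z v \<noteq> {}}"
  define U where "U = S + (mone - mmul h S (mstar S))"
  have J: "is_ideal J" and orth: "\<And>W. orth_idempotents J g W"
    unfolding J_def g_def by (simp_all add: is_ideal_lp_ideal orth_idempotents_lp_ideal)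
  have Z: "\<And>v. Z v \<subseteq> {1..h}" and \<sigma>: "\<And>v. \<sigma>v v permutes Z v"
    using Z_cover perm by blast+
  have finV: "finite V"
    unfolding V_def using Z Z_disj by (intro finite_nonempty_disjoint[of "{1..h}"]) auto
  have blocks: "(\<Sum>v\<in>V. \<Sum>t\<in>Z v. munit (g v) t (\<tau> v t)) = idem_mat g W 0 (\<lambda>v. perm_mat (Z v) (\<tau> v))"
    if "finite W" and "V \<subseteq> W" for \<tau> W
    using that finite_subset[OF Z] unfolding V_def by (intro sum_munit_eq_idem_mat) auto
  have S_eq: "S = idem_mat g W 0 (\<lambda>v. perm_mat (Z v) (\<sigma>v v))"
    and P_eq: "P = idem_mat g W 0 (\<lambda>v. perm_mat (Z v) id)" if "finite W" and "V \<subseteq> W" for W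
    using blocks[OF that, of \<sigma>v] blocks[OF that, of "\<lambda>v. id"] unfolding S_def P_def g_def V_def by simp_all
  have S_star: "mstar S = idem_mat g V 0 (\<lambda>v. perm_mat (Z v) (inv (\<sigma>v v)))"
    and P_star: "mstar P = P"
    unfolding S_eq[OF finV order_refl] P_eq[OF finV order_refl] g_def using Z_disj \<sigma>
    by (simp_all add: mstar_idem_mat_perm_mat[OF finV] permutes_id inv_id)
  have SS: "mcong J h (mmul h S (mstar S)) P" and "mcong J h (mmul h (mstar S) S) P" and "mcong J h (mmul h P P) P"
    unfolding S_star unfolding S_eq[OF finV order_refl] P_eq[OF finV order_refl]
    using idem_mat_perm_mat_partial_isometry[OF J finV orth Z \<sigma>] by simp_all
  moreover have U: "mcong J h U (idem_mat g W mone (\<lambda>v. perm_mat UNIV (\<sigma>v v)))"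
    if "finite W" and "V \<subseteq> W" for W
  proof -
    have "mcong J h U (S + (mone - P))"
      unfolding U_def by (intro mcong_add mcong_diff mcong_refl SS J)
    moreover have "S + (mone - P) = idem_mat g W mone (\<lambda>v. perm_mat UNIV (\<sigma>v v))"
      unfolding S_eq[OF that] P_eq[OF that] using \<sigma> by (intro idem_mat_perm_mat_complement)
    ultimately show ?thesis
      by simp
  qed
  moreover have "\<sigma>v v permutes {1..h}" for v
    using permutes_subset[OF \<sigma> Z] .
  ultimately show ?thesis
    using P_star minvertible_mod_cong[OF J U[OF finV order_refl] minvertible_mod_idem_mat_perm_mat[OF J finV orth]]
      k1_eq_cong[OF J U k1_eq_idem_mat_perm_mat[OF J orth]]
    unfolding Let_def U_def[symmetric] V_def g_def by (auto simp: mcong_refl[OF J])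
qed

end
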